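(* Let $(S,\mathcal{E})$ be a qualitative evidence frame and let $\mathfrak{F}$ be a set of evidence allocation functions on $(S,\mathcal{E})$. Define $i:2^{\mathcal{E}}\to\tau_{\mathcal{E}}$ by $i(\mathbf{E})=\bigcap\mathbf{E}$ if $\mathbf{E}\neq\emptyset$ and $i(\emptyset)=S$. Then $\mathfrak{F}\cup\{i\}$ is a set of evidence allocation functions on $(S,\mathcal{E})$.
   Context: A qualitative evidence frame is a pair $(S,\mathcal{E})$ where $S$ is a finite nonempty set (of possible states) and $\mathcal{E}$ is a nonempty family of subsets of $S$ with $\emptyset\notin\mathcal{E}$ and $S\notin\mathcal{E}$. For any family $\mathbf{E}\subseteq 2^S$, $\tau_{\mathbf{E}}$ denotes the topology on $S$ generated by $\mathbf{E}$ (as a subbasis): it consists of $\emptyset$, $S$, all finite intersections of members of $\mathbf{E}$, and all arbitrary unions of such finite intersections. For $\mathbf{E}\subseteq\mathcal{E}$, an element $D\in\tau_{\mathbf{E}}$ is called dense in $\bigcup\mathbf{E}$ w.r.t. $\tau_{\mathbf{E}}$ if $D\cap T\neq\emptyset$ for every nonempty $T\in\tau_{\mathbf{E}}$. A set of evidence allocation functions on $(S,\mathcal{E})$ is a set $\mathfrak{F}$ of functions $2^{\mathcal{E}}\to\tau_{\mathcal{E}}$ such that for all $f,g\in\mathfrak{F}$: (1) $f(\emptyset)=S$; (2) for every nonempty $\mathbf{E}\subseteq\mathcal{E}$, either $f(\mathbf{E})=\emptyset$, or $f(\mathbf{E})\in\tau_{\mathbf{E}}$ and $f(\mathbf{E})$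 is dense in $\bigcup\mathbf{E}$ w.r.t. $\tau_{\mathbf{E}}$; (3) for every $\mathbf{E}\subseteq\mathcal{E}$, $f(\mathbf{E})\subseteq g(\mathbf{E})$ or $g(\mathbf{E})\subseteq f(\mathbf{E})$. *)

theory Defs
  imports Main
begin

definition qual_evidence_frame :: "'a set \<Rightarrow> 'a set set \<Rightarrow> bool" where
  "qual_evidence_frame S \<E> \<longleftrightarrow> finite S \<and> S \<noteq> {} \<and> \<E> \<noteq> {} \<and> \<E> \<subseteq> Pow S
     \<and> {} \<notin> \<E> \<and> S \<notin> \<E>"

definition fin_inters :: "'a set \<Rightarrow> 'a set set \<Rightarrow> 'a set set" where
  "fin_inters S B = insert S {\<Inter>F | F. finite F \<and> F \<noteq> {} \<and> F \<subseteq> B}"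

definition gen_top :: "'a set \<Rightarrow> 'a set set \<Rightarrow> 'a set set" where
  "gen_top S B = insert {} (insert S {\<Union>U | U. U \<subseteq> fin_inters S B})"

definition dense_wrt :: "'a set \<Rightarrow> 'a set set \<Rightarrow> 'a set \<Rightarrow> bool" where
  "dense_wrt S Es D \<longleftrightarrow> (\<forall>T\<in>gen_top S Es. T \<noteq> {} \<longrightarrow> D \<inter> T \<noteq> {})"

definition evidence_allocation_set ::
  "'a set \<Rightarrow> 'a set set \<Rightarrow> ('a set set \<Rightarrow> 'a set) set \<Rightarrow> bool" where
  "evidence_allocation_set S \<E> \<FF> \<longleftrightarrow>
     (\<forall>f\<in>\<FF>. (\<forall>Es. Es \<subseteq> \<E> \<longrightarrow> f Es \<in> gen_top S \<E>)
        \<and> f {} = S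
        \<and> (\<forall>Es. Es \<subseteq> \<E> \<longrightarrow> Es \<noteq> {} \<longrightarrow>
              f Es = {} \<or> (f Es \<in> gen_top S Es \<and> dense_wrt S Es (f Es))))
   \<and> (\<forall>f\<in>\<FF>. \<forall>g\<in>\<FF>. \<forall>Es. Es \<subseteq> \<E> \<longrightarrow> f Es \<subseteq> g Es \<or> g Es \<subseteq> f Es)"

end

theory Submission
  imports Defs
begin

text \<open>For nonempty Es, the set \<Inter>Es is open in the topology generated by Es and lies in
  every nonempty open set of it: it is a finite intersection of subbasic sets, it lies in every
  such intersection, hence in every nonempty union of them. So \<Inter>Es is dense when nonempty,
  and it is comparable with every allocated set, which is either empty or nonempty open.\<close>

definition evidence_allocation :: "'a set \<Rightarrow> 'a set set \<Rightarrow> ('a set set \<Rightarrow> 'a set) \<Rightarrow> bool" where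
  "evidence_allocation S \<E> f \<longleftrightarrow>
     (\<forall>Es. Es \<subseteq> \<E> \<longrightarrow> f Es \<in> gen_top S \<E>)
     \<and> f {} = S
     \<and> (\<forall>Es. Es \<subseteq> \<E> \<longrightarrow> Es \<noteq> {} \<longrightarrow>
           f Es = {} \<or> (f Es \<in> gen_top S Es \<and> dense_wrt S Es (f Es)))"

lemma evidence_allocation_set_iff:
  "evidence_allocation_set S \<E> \<FF> \<longleftrightarrow>
     (\<forall>f\<in>\<FF>. evidence_allocation S \<E> f)
     \<and> (\<forall>f\<in>\<FF>. \<forall>g\<in>\<FF>. \<forall>Es. Es \<subseteq> \<E> \<longrightarrow> f Es \<subseteq> g Es \<or> g Es \<subseteq> f Es)"
  unfolding evidence_allocation_set_def evidence_allocation_def ..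

lemma evidence_allocation_set_Un_singleton:
  assumes "evidence_allocation_set S \<E> \<FF>"
    and "evidence_allocation S \<E> i"
    and "\<And>f Es. f \<in> \<FF> \<Longrightarrow> Es \<subseteq> \<E> \<Longrightarrow> f Es \<subseteq> i Es \<or> i Es \<subseteq> f Es"
  shows "evidence_allocation_set S \<E> (\<FF> \<union> {i})"
proof -
  have alloc: "\<forall>f\<in>\<FF>. evidence_allocation S \<E> f"
    and comparable: "\<forall>f\<in>\<FF>. \<forall>g\<in>\<FF>. \<forall>Es. Es \<subseteq> \<E> \<longrightarrow> f Es \<subseteq> g Es \<or> g Es \<subseteq> f Es"
    using assms(1) unfolding evidence_allocation_set_iff by simp_all
  have "f Es \<subseteq> g Es \<or> g Es \<subseteq> f Es"
    if f: "f \<in> \<FF> \<union> {i}" and g: "g \<in> \<FF> \<union> {i}" and Es: "Es \<subseteq> \<E>" for f g Es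
  proof -
    consider "f \<in> \<FF>" "g \<in> \<FF>" | "f = i" | "g = i"
      using f g by blast
    then show ?thesis
    proof cases
      case 1
      then show ?thesis using comparable Es by blast
    next
      case 2
      then show ?thesis using assms(3)[of g Es] g Es by (cases "g = i") (simp_all add: disj_commute)
    next
      case 3
      then show ?thesis using assms(3)[of f Es] f Es by (cases "f = i") simp_all
    qed
  qed
  then show ?thesis
    using alloc assms(2) unfolding evidence_allocation_set_iff by simp
qed

lemma Inter_in_gen_top:
  assumes "finite Es" "Es \<noteq> {}" "Es \<subseteq> B"
  shows "\<Inter>Es \<in> gen_top S B"
proof -
  have "\<Inter>Es \<in> fin_inters S B"
    using assms unfolding fin_inters_def by blast
  then have "\<Union>{\<Inter>Es} \<in> gen_top S B"
    unfolding gen_top_def by blast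
  then show ?thesis by simp
qed

lemma Inter_subset_gen_top:
  assumes "Es \<subseteq> Pow S" "Es \<noteq> {}" "T \<in> gen_top S Es" "T \<noteq> {}"
  shows "\<Inter>Es \<subseteq> T"
proof -
  have "\<Inter>Es \<subseteq> u" if "u \<in> fin_inters S Es" for u
    using that assms(1,2) unfolding fin_inters_def by blast
  then show ?thesis
    using assms unfolding gen_top_def by blast
qed

lemma dense_wrt_Inter:
  assumes "Es \<subseteq> Pow S" "Es \<noteq> {}" "\<Inter>Es \<noteq> {}"
  shows "dense_wrt S Es (\<Inter>Es)"
  using assms Inter_subset_gen_top[OF assms(1,2)]
  unfolding dense_wrt_def by (metis inf.absorb1)

lemma evidence_allocation_Inter:
  assumes "finite \<E>" "\<E> \<subseteq> Pow S"
  shows "evidence_allocation S \<E> (\<lambda>Es. if Es = {} then S else \<Inter>Es)"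
proof -
  have open_in_frame: "(if Es = {} then S else \<Inter>Es) \<in> gen_top S \<E>"
    if "Es \<subseteq> \<E>" for Es
  proof (cases "Es = {}")
    case True
    then show ?thesis unfolding gen_top_def by simp
  next
    case False
    then show ?thesis
      using Inter_in_gen_top[OF finite_subset[OF that assms(1)] False that] by simp
  qed
  have open_dense: "\<Inter>Es = {} \<or> (\<Inter>Es \<in> gen_top S Es \<and> dense_wrt S Es (\<Inter>Es))"
    if "Es \<subseteq> \<E>" "Es \<noteq> {}" for Es
  proof -
    have "Es \<subseteq> Pow S"
      using that(1) assms(2) by (rule subset_trans)
    then show ?thesis
      using Inter_in_gen_top[OF finite_subset[OF that(1) assms(1)] that(2) subset_refl]
        dense_wrt_Inter[of Es S] that(2) by blast
  qed
  show ?thesis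
    unfolding evidence_allocation_def using open_in_frame open_dense by simp
qed

lemma evidence_allocation_comparable_Inter:
  assumes "evidence_allocation S \<E> f" "\<E> \<subseteq> Pow S" "Es \<subseteq> \<E>"
  shows "f Es \<subseteq> (if Es = {} then S else \<Inter>Es) \<or> (if Es = {} then S else \<Inter>Es) \<subseteq> f Es"
proof (cases "Es = {} \<or> f Es = {}")
  case True
  moreover have "f {} = S"
    using assms(1) unfolding evidence_allocation_def by blast
  ultimately show ?thesis by auto
next
  case False
  then have "f Es \<in> gen_top S Es"
    using assms(1,3) unfolding evidence_allocation_def by blast
  moreover have "Es \<subseteq> Pow S"
    using assms(3,2) by (rule subset_trans)
  ultimately have "\<Inter>Es \<subseteq> f Es"
    using Inter_subset_gen_top False by blast
  then show ?thesis
    using False by simp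
qed

theorem proposition1:
  fixes S :: "'a set" and \<E> :: "'a set set" and \<FF> :: "('a set set \<Rightarrow> 'a set) set"
  assumes "qual_evidence_frame S \<E>"
    and "evidence_allocation_set S \<E> \<FF>"
  shows "evidence_allocation_set S \<E>
           (\<FF> \<union> {\<lambda>Es. if Es = {} then S else \<Inter>Es})"
proof -
  have "\<E> \<subseteq> Pow S" and "finite S"
    using assms(1) unfolding qual_evidence_frame_def by simp_all
  then have "finite \<E>"
    by (simp add: finite_subset)
  show ?thesis
  proof (rule evidence_allocation_set_Un_singleton)
    show "evidence_allocation S \<E> (\<lambda>Es. if Es = {} then S else \<Inter>Es)"
      using \<open>finite \<E>\<close> \<open>\<E> \<subseteq> Pow S\<close> by (rule evidence_allocation_Inter)
    fix f Es
    assume "f \<in> \<FF>" "Es \<subseteq> \<E>"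
    then have "evidence_allocation S \<E> f"
      using assms(2) unfolding evidence_allocation_set_iff by blast
    then show "f Es \<subseteq> (if Es = {} then S else \<Inter>Es) \<or> (if Es = {} then S else \<Inter>Es) \<subseteq> f Es"
      using \<open>\<E> \<subseteq> Pow S\<close> \<open>Es \<subseteq> \<E>\<close> by (rule evidence_allocation_comparable_Inter)
  qed (fact assms(2))
qed

end
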